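(* Let $\{\mathbf{Y}_n\}_{n\ge1}$ be a pMAX random field (defined in the context). Let $n\ge 1$, $r\ge 0$ and $x,x'\in\mathbb{R}^2$, and assume the tail dependence coefficients appearing below exist. (a) If $r>0$, then $$\lambda(Y_{n+r}(x')\mid Y_n(x))=\begin{cases}0, & \alpha(x)<1,\\[2pt] \tfrac12\,\lambda(X_{n+r}(x')\mid X_n(x)), & \alpha(x)=1,\\[2pt] \lambda(X_{n+r}(x')\mid X_n(x)), & \alpha(x)>1.\end{cases}$$ (b) If $r=0$ and $x\neq x'$, then $$\lambda(Y_{n}(x')\mid Y_n(x))=\begin{cases}\lambda\big(Z_n(x')^{1/\alpha(x')}\mid Z_n(x)^{1/\alpha(x)}\big), & \alpha(x)<1,\\[2pt] \tfrac12\Big(\lambda(X_{n}(x')\mid X_n(x))+\lambda\big(Z_n(x')^{1/\alpha(x')}\mid Z_n(x)^{1/\alpha(x)}\big)\Big), & \alpha(x)=1,\\[2pt] \lambda(X_{n}(x')\mid X_n(x)), & \alpha(x)>1.\end{cases}$$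
   Context: A random variable has the standard (unit) Fréchet distribution if $P(\cdot\le z)=e^{-1/z}$ for $z>0$. A pMAX random field is a sequence $\{\mathbf{Y}_n\}_{n\ge1}=\{Y_n(x):x\in\mathbb{R}^2\}_{n\ge1}$ with $Y_n(x)=X_n(x)\vee Z_n(x)^{1/\alpha(x)}$, where: (i) $\{\mathbf{X}_n\}_{n\ge1}=\{X_n(x):x\in\mathbb{R}^2\}_{n\ge1}$ is a stationary sequence of random fields with standard Fréchet marginals; (ii) $\{\mathbf{Z}_n\}_{n\ge1}=\{Z_n(x):x\in\mathbb{R}^2\}_{n\ge1}$ is a sequence of i.i.d. random fields with standard Fréchet marginals, independent of $\{\mathbf{X}_n\}$; (iii) $\alpha:\mathbb{R}^2\to(0,\infty)$ is a function. Here $a\vee b=\max(a,b)$. For random variables $U,V$, the (upper) tail dependence coefficient is $\lambda(V\mid U)=\lim_{y\to\infty}P(V>y\mid U>y)$. *)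

theory Defs
  imports "HOL-Probability.Probability"
begin

text \<open>Points of the plane are vectors in real^2.  A sequence of random fields on a
probability space M is a function  X :: nat => real^2 => 'w => real,  with
X n x the random variable X_n(x).  Only indices n >= 1 are meaningful.\<close>

definition std_frechet :: "'w measure \<Rightarrow> ('w \<Rightarrow> real) \<Rightarrow> bool" where
  "std_frechet M V \<longleftrightarrow> V \<in> borel_measurable M \<and>
     (\<forall>z::real. z > 0 \<longrightarrow> measure M {\<omega> \<in> space M. V \<omega> \<le> z} = exp (- 1 / z))"

definition field_space :: "(real^2 \<Rightarrow> real) measure" where
  "field_space = PiM UNIV (\<lambda>_. borel)"

definition seq_space :: "(nat \<Rightarrow> real^2 \<Rightarrow> real) measure" where
  "seq_space = PiM {1..} (\<lambda>_. field_space)"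

definition stationary_seq :: "'w measure \<Rightarrow> (nat \<Rightarrow> real^2 \<Rightarrow> 'w \<Rightarrow> real) \<Rightarrow> bool" where
  "stationary_seq M X \<longleftrightarrow>
     (\<forall>k::nat. \<forall>I::(nat \<times> (real^2)) set. finite I \<and> I \<subseteq> {1..} \<times> UNIV \<longrightarrow>
        distr M (PiM I (\<lambda>_. borel)) (\<lambda>\<omega>. \<lambda>i\<in>I. X (fst i + k) (snd i) \<omega>) =
        distr M (PiM I (\<lambda>_. borel)) (\<lambda>\<omega>. \<lambda>i\<in>I. X (fst i) (snd i) \<omega>))"

definition iid_seq :: "'w measure \<Rightarrow> (nat \<Rightarrow> real^2 \<Rightarrow> 'w \<Rightarrow> real) \<Rightarrow> bool" where
  "iid_seq M Z \<longleftrightarrow>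
     prob_space.indep_vars M (\<lambda>_. field_space) (\<lambda>n \<omega>. \<lambda>x. Z n x \<omega>) {1..} \<and>
     (\<forall>n\<ge>1. distr M field_space (\<lambda>\<omega> x. Z n x \<omega>) = distr M field_space (\<lambda>\<omega> x. Z 1 x \<omega>))"

definition indep_seqs :: "'w measure \<Rightarrow> (nat \<Rightarrow> real^2 \<Rightarrow> 'w \<Rightarrow> real)
    \<Rightarrow> (nat \<Rightarrow> real^2 \<Rightarrow> 'w \<Rightarrow> real) \<Rightarrow> bool" where
  "indep_seqs M X Z \<longleftrightarrow>
     prob_space.indep_var M
       seq_space (\<lambda>\<omega>. \<lambda>n\<in>{1..}. \<lambda>x. X n x \<omega>)
       seq_space (\<lambda>\<omega>. \<lambda>n\<in>{1..}. \<lambda>x. Z n x \<omega>)"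

definition pmax_Y :: "(nat \<Rightarrow> real^2 \<Rightarrow> 'w \<Rightarrow> real) \<Rightarrow> (nat \<Rightarrow> real^2 \<Rightarrow> 'w \<Rightarrow> real)
    \<Rightarrow> (real^2 \<Rightarrow> real) \<Rightarrow> nat \<Rightarrow> real^2 \<Rightarrow> 'w \<Rightarrow> real" where
  "pmax_Y X Z \<alpha> n x \<omega> = max (X n x \<omega>) (Z n x \<omega> powr (1 / \<alpha> x))"

definition pMAX :: "'w measure \<Rightarrow> (nat \<Rightarrow> real^2 \<Rightarrow> 'w \<Rightarrow> real)
    \<Rightarrow> (nat \<Rightarrow> real^2 \<Rightarrow> 'w \<Rightarrow> real) \<Rightarrow> (real^2 \<Rightarrow> real) \<Rightarrow> bool" where
  "pMAX M X Z \<alpha> \<longleftrightarrow> prob_space M \<and>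
     (\<forall>n\<ge>1. \<forall>x. std_frechet M (X n x)) \<and> stationary_seq M X \<and>
     (\<forall>n\<ge>1. \<forall>x. std_frechet M (Z n x)) \<and> iid_seq M Z \<and>
     indep_seqs M X Z \<and>
     (\<forall>x. \<alpha> x > 0)"

definition tail_ratio :: "'w measure \<Rightarrow> ('w \<Rightarrow> real) \<Rightarrow> ('w \<Rightarrow> real) \<Rightarrow> real \<Rightarrow> real" where
  "tail_ratio M V U y =
     measure M {\<omega> \<in> space M. V \<omega> > y \<and> U \<omega> > y} / measure M {\<omega> \<in> space M. U \<omega> > y}"

definition tail_dep_exists :: "'w measure \<Rightarrow> ('w \<Rightarrow> real) \<Rightarrow> ('w \<Rightarrow> real) \<Rightarrow> bool" where
  "tail_dep_exists M V U \<longleftrightarrow> (\<exists>L. (tail_ratio M V U \<longlongrightarrow> L) at_top)"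

definition tail_dep :: "'w measure \<Rightarrow> ('w \<Rightarrow> real) \<Rightarrow> ('w \<Rightarrow> real) \<Rightarrow> real" where
  "tail_dep M V U = Lim at_top (tail_ratio M V U)"

end

theory Submission
  imports Defs "HOL-Real_Asymp.Real_Asymp"
begin

text \<open>Write Y_n(x) = max A B with A = X_n(x), B = Z_n(x)^(1/alpha(x)), and Y_(n+r)(x') = max A' B'
  likewise.  As the X- and Z-sequences are independent, P(Y_n(x) > y) = a + b - a b for the tails
  a, b of A, B, and the joint tail of the two maxima is P(A' > y, A > y) + P(B' > y, B > y) up to
  terms of order a b, a' b, a b', which are negligible.  Since a ~ 1/y and b ~ y^(-alpha(x)), the
  heavier-tailed component dominates: only X counts if alpha(x) > 1, only Z if alpha(x) < 1, and
  both with weight 1/2 if alpha(x) = 1.  For r > 0 the Z-part vanishes, Z_(n+r) and Z_n being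
  independent.\<close>

abbreviation tail_prob :: "'w measure \<Rightarrow> ('w \<Rightarrow> real) \<Rightarrow> real \<Rightarrow> real" where
  "tail_prob M V y \<equiv> \<P>(\<omega> in M. V \<omega> > y)"

lemma tendsto_ratio_of_union_bounds:
  fixes a b a' b' c d N s :: "real \<Rightarrow> real"
  assumes bounds: "\<forall>\<^sub>F y in at_top. c y + d y - a y * b y \<le> N y \<and>
                                     N y \<le> c y + d y + a' y * b y + a y * b' y"
    and s_pos: "\<forall>\<^sub>F y in at_top. s y > 0"
    and a: "(a \<longlongrightarrow> 0) at_top" and a': "(a' \<longlongrightarrow> 0) at_top" and b': "(b' \<longlongrightarrow> 0) at_top"
    and as: "((\<lambda>y. a y / s y) \<longlongrightarrow> p) at_top" and bs: "((\<lambda>y. b y / s y) \<longlongrightarrow> q) at_top"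
    and cds: "((\<lambda>y. (c y + d y) / s y) \<longlongrightarrow> L) at_top" and pq: "p + q \<noteq> 0"
  shows "((\<lambda>y. N y / (a y + b y - a y * b y)) \<longlongrightarrow> L / (p + q)) at_top"
proof -
  have "((\<lambda>y. N y / s y) \<longlongrightarrow> L) at_top"
  proof (rule tendsto_sandwich)
    show "\<forall>\<^sub>F y in at_top. (c y + d y) / s y - a y * (b y / s y) \<le> N y / s y"
      using bounds s_pos by eventually_elim (simp add: diff_divide_distrib[symmetric] divide_right_mono)
    show "\<forall>\<^sub>F y in at_top. N y / s y \<le> (c y + d y) / s y + a' y * (b y / s y) + a y / s y * b' y"
      using bounds s_pos by eventually_elim (simp add: add_divide_distrib[symmetric] divide_right_mono)
    show "((\<lambda>y. (c y + d y) / s y - a y * (b y / s y)) \<longlongrightarrow> L) at_top"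
      using tendsto_diff[OF cds tendsto_mult[OF a bs]] by simp
    show "((\<lambda>y. (c y + d y) / s y + a' y * (b y / s y) + a y / s y * b' y) \<longlongrightarrow> L) at_top"
      using tendsto_add[OF tendsto_add[OF cds tendsto_mult[OF a' bs]] tendsto_mult[OF as b']] by simp
  qed
  moreover have "((\<lambda>y. a y / s y + b y / s y - a y * (b y / s y)) \<longlongrightarrow> p + q) at_top"
    using tendsto_diff[OF tendsto_add[OF as bs] tendsto_mult[OF a bs]] by simp
  ultimately have lim: "((\<lambda>y. (N y / s y) / (a y / s y + b y / s y - a y * (b y / s y)))
                     \<longlongrightarrow> L / (p + q)) at_top"
    using pq by (rule tendsto_divide)
  have eq: "\<forall>\<^sub>F y in at_top. (N y / s y) / (a y / s y + b y / s y - a y * (b y / s y))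
                                   = N y / (a y + b y - a y * b y)"
    using s_pos
  proof eventually_elim
    case (elim y)
    then have "a y / s y + b y / s y - a y * (b y / s y) = (a y + b y - a y * b y) / s y"
      by (simp add: field_simps)
    with elim show ?case
      by simp
  qed
  show ?thesis
    using iffD1[OF tendsto_cong[OF eq] lim] .
qed

lemma (in prob_space) tail_prob_tendsto_0:
  assumes "random_variable borel V"
  shows "(tail_prob M V \<longlongrightarrow> 0) at_top"
proof -
  interpret V: real_distribution "distr M borel V"
    using assms by simp
  have tail_eq: "tail_prob M V y = 1 - cdf (distr M borel V) y" for y
  proof -
    have "cdf (distr M borel V) y = \<P>(\<omega> in M. V \<omega> \<le> y)"
      using assms by (simp add: cdf_def measure_distr vimage_def Int_def conj_commute)
    moreover have "tail_prob M V y = 1 - \<P>(\<omega> in M. V \<omega> \<le> y)"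
      using assms prob_neg[of "\<lambda>\<omega>. V \<omega> \<le> y"] by (simp add: not_le)
    ultimately show ?thesis
      by simp
  qed
  have "((\<lambda>y. 1 - cdf (distr M borel V) y) \<longlongrightarrow> 1 - 1) at_top"
    by (intro tendsto_intros V.cdf_lim_at_top_prob)
  then show ?thesis
    by (simp add: tail_eq)
qed

lemma (in prob_space) prob_gt_indep:
  fixes U V :: "'a \<Rightarrow> real"
  assumes "indep_var borel U borel V"
  shows "\<P>(\<omega> in M. U \<omega> > s \<and> V \<omega> > t) = tail_prob M U s * tail_prob M V t"
proof -
  have "prob ((\<lambda>\<omega>. (U \<omega>, V \<omega>)) -` ({s<..} \<times> {t<..}) \<inter> space M) =
        prob (U -` {s<..} \<inter> space M) * prob (V -` {t<..} \<inter> space M)"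
    by (rule indep_varD[OF assms]) auto
  then show ?thesis
    by (simp add: vimage_def Int_def conj_commute)
qed

lemma (in prob_space) indep_var_compose_real:
  fixes U V :: "'a \<Rightarrow> real"
  assumes "indep_var borel U borel V" "f \<in> borel_measurable borel" "g \<in> borel_measurable borel"
  shows "indep_var borel (\<lambda>\<omega>. f (U \<omega>)) borel (\<lambda>\<omega>. g (V \<omega>))"
  using indep_var_compose[OF assms] by (simp add: comp_def)

lemma (in prob_space) tail_ratio_tendsto_0_if_indep:
  assumes "indep_var borel U borel V"
  shows "(tail_ratio M V U \<longlongrightarrow> 0) at_top"
proof (rule Lim_null_comparison)
  show "((\<lambda>y. tail_prob M V y) \<longlongrightarrow> 0) at_top"
    using tail_prob_tendsto_0 indep_var_rv2[OF assms] by simp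
  have "tail_ratio M V U y = tail_prob M U y * tail_prob M V y / tail_prob M U y" for y
    using prob_gt_indep[OF assms, of y y] by (simp add: tail_ratio_def conj_commute)
  then show "\<forall>\<^sub>F y in at_top. norm (tail_ratio M V U y) \<le> tail_prob M V y"
    by (simp add: abs_mult)
qed

lemma (in prob_space) tail_prob_max_indep:
  fixes A B :: "'a \<Rightarrow> real"
  assumes "indep_var borel A borel B"
  shows "tail_prob M (\<lambda>\<omega>. max (A \<omega>) (B \<omega>)) y
           = tail_prob M A y + tail_prob M B y - tail_prob M A y * tail_prob M B y"
proof -
  have [measurable]: "A \<in> borel_measurable M" "B \<in> borel_measurable M"
    using indep_var_rv1[OF assms] indep_var_rv2[OF assms] by auto
  let ?SA = "{\<omega> \<in> space M. A \<omega> > y}" and ?SB = "{\<omega> \<in> space M. B \<omega> > y}"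
  have "tail_prob M (\<lambda>\<omega>. max (A \<omega>) (B \<omega>)) y = prob (?SA \<union> ?SB)"
    by (auto simp: less_max_iff_disj intro!: arg_cong[where f = prob])
  also have "\<dots> = prob ?SA + prob ?SB - prob (?SA \<inter> ?SB)"
    by (rule measure_Un3) (auto simp: fmeasurable_eq_sets)
  also have "?SA \<inter> ?SB = {\<omega> \<in> space M. A \<omega> > y \<and> B \<omega> > y}"
    by auto
  finally show ?thesis
    by (simp add: prob_gt_indep[OF assms])
qed

text \<open>The event that both maxima exceed y is the union of the four events in which one
  component of each maximum does; the two "diagonal" ones carry the dependence.\<close>

lemma (in prob_space) prob_max_pair_gt_lower:
  fixes A B A' B' :: "'a \<Rightarrow> real"
  assumes indep: "indep_var borel A borel B"
    and [measurable]: "A' \<in> borel_measurable M" "B' \<in> borel_measurable M"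
  shows "\<P>(\<omega> in M. A' \<omega> > y \<and> A \<omega> > y) + \<P>(\<omega> in M. B' \<omega> > y \<and> B \<omega> > y)
           - tail_prob M A y * tail_prob M B y
         \<le> \<P>(\<omega> in M. max (A' \<omega>) (B' \<omega>) > y \<and> max (A \<omega>) (B \<omega>) > y)"
proof -
  have [measurable]: "A \<in> borel_measurable M" "B \<in> borel_measurable M"
    using indep_var_rv1[OF indep] indep_var_rv2[OF indep] by auto
  let ?EA = "{\<omega> \<in> space M. A' \<omega> > y \<and> A \<omega> > y}" and ?EB = "{\<omega> \<in> space M. B' \<omega> > y \<and> B \<omega> > y}"
  have "prob (?EA \<inter> ?EB) \<le> \<P>(\<omega> in M. A \<omega> > y \<and> B \<omega> > y)"
    by (rule finite_measure_mono) auto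
  then have "prob ?EA + prob ?EB - tail_prob M A y * tail_prob M B y \<le> prob (?EA \<union> ?EB)"
    by (simp add: measure_Un3 fmeasurable_eq_sets prob_gt_indep[OF indep])
  also have "\<dots> \<le> \<P>(\<omega> in M. max (A' \<omega>) (B' \<omega>) > y \<and> max (A \<omega>) (B \<omega>) > y)"
    by (rule finite_measure_mono) (auto simp: less_max_iff_disj)
  finally show ?thesis .
qed

lemma (in prob_space) prob_max_pair_gt_upper:
  fixes A B A' B' :: "'a \<Rightarrow> real"
  assumes indep_A'_B: "indep_var borel A' borel B" and indep_A_B': "indep_var borel A borel B'"
  shows "\<P>(\<omega> in M. max (A' \<omega>) (B' \<omega>) > y \<and> max (A \<omega>) (B \<omega>) > y)
         \<le> \<P>(\<omega> in M. A' \<omega> > y \<and> A \<omega> > y) + \<P>(\<omega> in M. B' \<omega> > y \<and> B \<omega> > y)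
           + tail_prob M A' y * tail_prob M B y + tail_prob M A y * tail_prob M B' y"
proof -
  have [measurable]: "A \<in> borel_measurable M" "B \<in> borel_measurable M"
    "A' \<in> borel_measurable M" "B' \<in> borel_measurable M"
    using indep_var_rv1 indep_var_rv2 indep_A'_B indep_A_B' by auto
  let ?EA = "{\<omega> \<in> space M. A' \<omega> > y \<and> A \<omega> > y}" and ?EB = "{\<omega> \<in> space M. B' \<omega> > y \<and> B \<omega> > y}"
    and ?EA'B = "{\<omega> \<in> space M. A' \<omega> > y \<and> B \<omega> > y}"
    and ?EAB' = "{\<omega> \<in> space M. A \<omega> > y \<and> B' \<omega> > y}"
  have "\<P>(\<omega> in M. max (A' \<omega>) (B' \<omega>) > y \<and> max (A \<omega>) (B \<omega>) > y) = prob (?EA \<union> ?EB \<union> ?EA'B \<union> ?EAB')"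
    by (auto simp: less_max_iff_disj intro!: arg_cong[where f = prob])
  also have "\<dots> \<le> prob (?EA \<union> ?EB \<union> ?EA'B) + prob ?EAB'"
    by (rule measure_Un_le) auto
  also have "prob (?EA \<union> ?EB \<union> ?EA'B) \<le> prob (?EA \<union> ?EB) + prob ?EA'B"
    by (rule measure_Un_le) auto
  also have "prob (?EA \<union> ?EB) \<le> prob ?EA + prob ?EB"
    by (rule measure_Un_le) auto
  finally show ?thesis
    by (simp add: prob_gt_indep[OF indep_A'_B] prob_gt_indep[OF indep_A_B'])
qed

lemma (in prob_space) prob_joint_gt_le_tail_prob:
  assumes "random_variable borel U"
  shows "\<P>(\<omega> in M. V \<omega> > y \<and> U \<omega> > y) \<le> tail_prob M U y"
  using assms by (intro finite_measure_mono) auto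

locale indep_max_pair = prob_space +
  fixes A B A' B' :: "'a \<Rightarrow> real"
  assumes indep_A_B: "indep_var borel A borel B"
    and indep_A'_B: "indep_var borel A' borel B"
    and indep_A_B': "indep_var borel A borel B'"
begin

lemma measurable_components [measurable]:
  "A \<in> borel_measurable M" "B \<in> borel_measurable M"
  "A' \<in> borel_measurable M" "B' \<in> borel_measurable M"
  using indep_var_rv1 indep_var_rv2 indep_A'_B indep_A_B' by auto

lemma tail_ratio_max_tendsto:
  assumes s_pos: "\<forall>\<^sub>F y in at_top. s y > 0"
    and "((\<lambda>y. tail_prob M A y / s y) \<longlongrightarrow> p) at_top"
    and "((\<lambda>y. tail_prob M B y / s y) \<longlongrightarrow> q) at_top"
    and "((\<lambda>y. (\<P>(\<omega> in M. A' \<omega> > y \<and> A \<omega> > y) + \<P>(\<omega> in M. B' \<omega> > y \<and> B \<omega> > y)) / s y)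
           \<longlongrightarrow> L) at_top"
    and "p + q \<noteq> 0"
  shows "(tail_ratio M (\<lambda>\<omega>. max (A' \<omega>) (B' \<omega>)) (\<lambda>\<omega>. max (A \<omega>) (B \<omega>)) \<longlongrightarrow> L / (p + q)) at_top"
proof -
  have "((\<lambda>y. \<P>(\<omega> in M. max (A' \<omega>) (B' \<omega>) > y \<and> max (A \<omega>) (B \<omega>) > y)
            / (tail_prob M A y + tail_prob M B y - tail_prob M A y * tail_prob M B y))
          \<longlongrightarrow> L / (p + q)) at_top"
  proof (rule tendsto_ratio_of_union_bounds[where a' = "tail_prob M A'" and b' = "tail_prob M B'",
                                            OF _ assms(1) _ _ _ assms(2-5)])
    show "\<forall>\<^sub>F y in at_top.
            \<P>(\<omega> in M. A' \<omega> > y \<and> A \<omega> > y) + \<P>(\<omega> in M. B' \<omega> > y \<and> B \<omega> > y)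
              - tail_prob M A y * tail_prob M B y
            \<le> \<P>(\<omega> in M. max (A' \<omega>) (B' \<omega>) > y \<and> max (A \<omega>) (B \<omega>) > y) \<and>
            \<P>(\<omega> in M. max (A' \<omega>) (B' \<omega>) > y \<and> max (A \<omega>) (B \<omega>) > y)
            \<le> \<P>(\<omega> in M. A' \<omega> > y \<and> A \<omega> > y) + \<P>(\<omega> in M. B' \<omega> > y \<and> B \<omega> > y)
              + tail_prob M A' y * tail_prob M B y + tail_prob M A y * tail_prob M B' y"
      using prob_max_pair_gt_lower[OF indep_A_B] prob_max_pair_gt_upper[OF indep_A'_B indep_A_B']
      by (simp add: always_eventually)
  qed (use tail_prob_tendsto_0 in simp_all)
  then show ?thesis
    by (simp add: tail_ratio_def[abs_def] tail_prob_max_indep[OF indep_A_B])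
qed

lemma tail_ratio_max_tendsto_first:
  assumes pos: "\<forall>\<^sub>F y in at_top. tail_prob M A y > 0"
    and BA: "((\<lambda>y. tail_prob M B y / tail_prob M A y) \<longlongrightarrow> 0) at_top"
    and LA: "(tail_ratio M A' A \<longlongrightarrow> L) at_top"
  shows "(tail_ratio M (\<lambda>\<omega>. max (A' \<omega>) (B' \<omega>)) (\<lambda>\<omega>. max (A \<omega>) (B \<omega>)) \<longlongrightarrow> L) at_top"
proof -
  have "((\<lambda>y. \<P>(\<omega> in M. B' \<omega> > y \<and> B \<omega> > y) / tail_prob M A y) \<longlongrightarrow> 0) at_top"
    by (rule Lim_null_comparison[OF _ BA])
      (use pos in \<open>eventually_elim, simp add: divide_right_mono prob_joint_gt_le_tail_prob\<close>)
  with LA have joint: "((\<lambda>y. (\<P>(\<omega> in M. A' \<omega> > y \<and> A \<omega> > y) + \<P>(\<omega> in M. B' \<omega> > y \<and> B \<omega> > y))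
                              / tail_prob M A y) \<longlongrightarrow> L + 0) at_top"
    unfolding tail_ratio_def[abs_def] add_divide_distrib by (rule tendsto_add)
  have AA: "((\<lambda>y. tail_prob M A y / tail_prob M A y) \<longlongrightarrow> 1) at_top"
    by (rule Lim_transform_eventually[OF tendsto_const]) (use pos in \<open>eventually_elim, simp\<close>)
  show ?thesis
    using tail_ratio_max_tendsto[OF pos AA BA joint] by simp
qed

lemma tail_ratio_max_tendsto_second:
  assumes pos: "\<forall>\<^sub>F y in at_top. tail_prob M B y > 0"
    and AB: "((\<lambda>y. tail_prob M A y / tail_prob M B y) \<longlongrightarrow> 0) at_top"
    and LB: "(tail_ratio M B' B \<longlongrightarrow> L) at_top"
  shows "(tail_ratio M (\<lambda>\<omega>. max (A' \<omega>) (B' \<omega>)) (\<lambda>\<omega>. max (A \<omega>) (B \<omega>)) \<longlongrightarrow> L) at_top"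
proof -
  have "((\<lambda>y. \<P>(\<omega> in M. A' \<omega> > y \<and> A \<omega> > y) / tail_prob M B y) \<longlongrightarrow> 0) at_top"
    by (rule Lim_null_comparison[OF _ AB])
      (use pos in \<open>eventually_elim, simp add: divide_right_mono prob_joint_gt_le_tail_prob\<close>)
  with LB have joint: "((\<lambda>y. (\<P>(\<omega> in M. A' \<omega> > y \<and> A \<omega> > y) + \<P>(\<omega> in M. B' \<omega> > y \<and> B \<omega> > y))
                              / tail_prob M B y) \<longlongrightarrow> 0 + L) at_top"
    unfolding tail_ratio_def[abs_def] add_divide_distrib by (intro tendsto_add)
  have BB: "((\<lambda>y. tail_prob M B y / tail_prob M B y) \<longlongrightarrow> 1) at_top"
    by (rule Lim_transform_eventually[OF tendsto_const]) (use pos in \<open>eventually_elim, simp\<close>)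
  show ?thesis
    using tail_ratio_max_tendsto[OF pos AB BB joint] by simp
qed

lemma tail_ratio_max_tendsto_balanced:
  assumes pos: "\<forall>\<^sub>F y in at_top. tail_prob M A y > 0"
    and BA: "\<forall>\<^sub>F y in at_top. tail_prob M B y = tail_prob M A y"
    and LA: "(tail_ratio M A' A \<longlongrightarrow> LA) at_top" and LB: "(tail_ratio M B' B \<longlongrightarrow> LB) at_top"
  shows "(tail_ratio M (\<lambda>\<omega>. max (A' \<omega>) (B' \<omega>)) (\<lambda>\<omega>. max (A \<omega>) (B \<omega>)) \<longlongrightarrow> (LA + LB) / 2) at_top"
proof -
  have "((\<lambda>y. \<P>(\<omega> in M. B' \<omega> > y \<and> B \<omega> > y) / tail_prob M A y) \<longlongrightarrow> LB) at_top"
    by (rule Lim_transform_eventually[OF LB]) (use BA in \<open>eventually_elim, simp add: tail_ratio_def\<close>)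
  with LA have joint: "((\<lambda>y. (\<P>(\<omega> in M. A' \<omega> > y \<and> A \<omega> > y) + \<P>(\<omega> in M. B' \<omega> > y \<and> B \<omega> > y))
                              / tail_prob M A y) \<longlongrightarrow> LA + LB) at_top"
    unfolding tail_ratio_def[abs_def] add_divide_distrib by (rule tendsto_add)
  have AA: "((\<lambda>y. tail_prob M A y / tail_prob M A y) \<longlongrightarrow> 1) at_top"
    and BA': "((\<lambda>y. tail_prob M B y / tail_prob M A y) \<longlongrightarrow> 1) at_top"
    by (rule Lim_transform_eventually[OF tendsto_const], use pos BA in \<open>eventually_elim, simp\<close>)+
  show ?thesis
    using tail_ratio_max_tendsto[OF pos AA BA' joint] by simp
qed

end

lemma powr_inverse_less_iff:
  fixes v y c :: real
  assumes "v > 0" "y > 0" "c > 0"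
  shows "y < v powr (1 / c) \<longleftrightarrow> y powr c < v"
proof
  assume "y < v powr (1 / c)"
  then have "y powr c < (v powr (1 / c)) powr c"
    using assms by (intro powr_less_mono2) auto
  then show "y powr c < v"
    using assms by (simp add: powr_powr)
next
  assume "y powr c < v"
  then have "(y powr c) powr (1 / c) < v powr (1 / c)"
    using assms by (intro powr_less_mono2) auto
  then show "y < v powr (1 / c)"
    using assms by (simp add: powr_powr)
qed

lemma (in prob_space) std_frechet_tail:
  assumes "std_frechet M V" "y > 0"
  shows "tail_prob M V y = 1 - exp (- 1 / y)"
proof -
  have [measurable]: "V \<in> borel_measurable M"
    using assms by (simp add: std_frechet_def)
  have "tail_prob M V y = 1 - \<P>(\<omega> in M. V \<omega> \<le> y)"
    using prob_neg[of "\<lambda>\<omega>. V \<omega> \<le> y"] by (simp add: not_le)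
  then show ?thesis
    using assms by (simp add: std_frechet_def)
qed

lemma (in prob_space) std_frechet_AE_pos:
  assumes "std_frechet M V"
  shows "AE \<omega> in M. V \<omega> > 0"
proof -
  have [measurable]: "V \<in> borel_measurable M"
    using assms by (simp add: std_frechet_def)
  have bound: "\<P>(\<omega> in M. V \<omega> \<le> 0) \<le> exp (- 1 / e)" if "e > 0" for e
  proof -
    have "\<P>(\<omega> in M. V \<omega> \<le> 0) \<le> \<P>(\<omega> in M. V \<omega> \<le> e)"
      using that by (intro finite_measure_mono) auto
    also have "\<dots> = exp (- 1 / e)"
      using assms that by (simp add: std_frechet_def)
    finally show ?thesis .
  qed
  have lim: "((\<lambda>e::real. exp (- 1 / e)) \<longlongrightarrow> 0) (at_right 0)"
    by real_asymp
  have "\<P>(\<omega> in M. V \<omega> \<le> 0) \<le> 0"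
    by (rule tendsto_le[OF _ lim tendsto_const])
      (use bound eventually_at_right_less[of 0] in \<open>auto elim: eventually_mono\<close>)
  then show ?thesis
    using prob_Collect_eq_0[of "\<lambda>\<omega>. V \<omega> \<le> 0"] measure_nonneg[of M] by (simp add: not_le antisym)
qed

lemma (in prob_space) std_frechet_powr_tail:
  assumes V: "std_frechet M V" and "c > 0" "y > 0"
  shows "tail_prob M (\<lambda>\<omega>. V \<omega> powr (1 / c)) y = 1 - exp (- 1 / y powr c)"
proof -
  have [measurable]: "V \<in> borel_measurable M"
    using V by (simp add: std_frechet_def)
  \<comment> \<open>\<open>powr\<close> is junk on negative bases, so the null event \<open>V \<le> 0\<close> has to be discarded.\<close>
  have "AE \<omega> in M. V \<omega> powr (1 / c) > y \<longleftrightarrow> V \<omega> > y powr c"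
    using std_frechet_AE_pos[OF V] by eventually_elim (simp add: powr_inverse_less_iff assms)
  then have "tail_prob M (\<lambda>\<omega>. V \<omega> powr (1 / c)) y = tail_prob M V (y powr c)"
    by (rule prob_eq_AE) measurable
  also have "\<dots> = 1 - exp (- 1 / y powr c)"
    using std_frechet_tail[OF V] assms by simp
  finally show ?thesis .
qed

lemma (in prob_space) std_frechet_tail_comparison:
  fixes U V :: "'a \<Rightarrow> real"
  assumes U: "std_frechet M U" and V: "std_frechet M V" and c: "c > 0"
  defines "W \<equiv> \<lambda>\<omega>. V \<omega> powr (1 / c)"
  shows std_frechet_tails_pos: "\<forall>\<^sub>F y in at_top. tail_prob M U y > 0 \<and> tail_prob M W y > 0"
    and std_frechet_tail_ratio_lt: "c < 1 \<Longrightarrow> ((\<lambda>y. tail_prob M U y / tail_prob M W y) \<longlongrightarrow> 0) at_top"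
    and std_frechet_tails_eq: "c = 1 \<Longrightarrow> \<forall>\<^sub>F y in at_top. tail_prob M W y = tail_prob M U y"
    and std_frechet_tail_ratio_gt: "c > 1 \<Longrightarrow> ((\<lambda>y. tail_prob M W y / tail_prob M U y) \<longlongrightarrow> 0) at_top"
proof -
  have tails: "\<forall>\<^sub>F y in at_top. tail_prob M U y = 1 - exp (- 1 / y) \<and>
                                 tail_prob M W y = 1 - exp (- 1 / y powr c)"
    using eventually_gt_at_top[of 0]
    by eventually_elim (simp add: W_def std_frechet_tail[OF U] std_frechet_powr_tail[OF V c])
  show "\<forall>\<^sub>F y in at_top. tail_prob M U y > 0 \<and> tail_prob M W y > 0"
    using tails eventually_gt_at_top[of 0] by eventually_elim simp
  show "((\<lambda>y. tail_prob M U y / tail_prob M W y) \<longlongrightarrow> 0) at_top" if "c < 1"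
  proof (rule Lim_transform_eventually)
    show "((\<lambda>y. (1 - exp (- 1 / y)) / (1 - exp (- 1 / y powr c))) \<longlongrightarrow> 0) at_top"
      using c that by real_asymp
  qed (use tails in \<open>eventually_elim, simp\<close>)
  show "\<forall>\<^sub>F y in at_top. tail_prob M W y = tail_prob M U y" if "c = 1"
    using tails eventually_gt_at_top[of 0] by eventually_elim (simp add: that)
  show "((\<lambda>y. tail_prob M W y / tail_prob M U y) \<longlongrightarrow> 0) at_top" if "c > 1"
  proof (rule Lim_transform_eventually)
    show "((\<lambda>y. (1 - exp (- 1 / y powr c)) / (1 - exp (- 1 / y))) \<longlongrightarrow> 0) at_top"
      using that by real_asymp
  qed (use tails in \<open>eventually_elim, simp\<close>)
qed

lemma measurable_PiM_field_eval:
  assumes "k \<in> I"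
  shows "(\<lambda>s. s k u) \<in> measurable (PiM I (\<lambda>_. field_space)) borel"
proof -
  have "(\<lambda>f. f u) \<in> measurable field_space borel"
    unfolding field_space_def by (rule measurable_component_singleton) simp
  with measurable_component_singleton[OF assms] show ?thesis
    by (rule measurable_compose)
qed

lemma (in prob_space) indep_seqs_indep_var:
  assumes "indep_seqs M X Z" "m \<ge> 1" "k \<ge> 1"
  shows "indep_var borel (X m u) borel (Z k v)"
proof -
  have "indep_var borel ((\<lambda>s. s m u) \<circ> (\<lambda>\<omega>. \<lambda>n\<in>{1..}. \<lambda>x. X n x \<omega>))
                  borel ((\<lambda>s. s k v) \<circ> (\<lambda>\<omega>. \<lambda>n\<in>{1..}. \<lambda>x. Z n x \<omega>))"
    using assms(1) unfolding indep_seqs_def seq_space_def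
    by (rule indep_var_compose) (use assms in \<open>auto intro!: measurable_PiM_field_eval\<close>)
  then show ?thesis
    using assms by (simp add: comp_def)
qed

lemma (in prob_space) iid_seq_indep_var:
  assumes "iid_seq M Z" "m \<ge> 1" "k \<ge> 1" "m \<noteq> k"
  shows "indep_var borel (Z m u) borel (Z k v)"
proof -
  have "indep_vars (\<lambda>_. field_space) (\<lambda>n \<omega>. \<lambda>x. Z n x \<omega>) {1..}"
    using assms(1) by (simp add: iid_seq_def)
  then have "indep_var borel ((\<lambda>s. s m u) \<circ> (\<lambda>\<omega>. restrict (\<lambda>i. \<lambda>x. Z i x \<omega>) {m}))
                       borel ((\<lambda>s. s k v) \<circ> (\<lambda>\<omega>. restrict (\<lambda>i. \<lambda>x. Z i x \<omega>) {k}))"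
    by (rule indep_var_compose[OF indep_var_restrict]) (use assms in \<open>auto intro!: measurable_PiM_field_eval\<close>)
  then show ?thesis
    by (simp add: comp_def)
qed

lemma pMAX_indep_max_pair:
  assumes pmax: "pMAX M X Z \<alpha>" and "n \<ge> 1" "m \<ge> 1"
  shows "indep_max_pair M (X n x) (\<lambda>\<omega>. Z n x \<omega> powr (1 / \<alpha> x))
                          (X m x') (\<lambda>\<omega>. Z m x' \<omega> powr (1 / \<alpha> x'))"
proof -
  interpret prob_space M
    using pmax by (simp add: pMAX_def)
  have "indep_var borel (X k u) borel (\<lambda>\<omega>. Z l v \<omega> powr c)" if "k \<ge> 1" "l \<ge> 1" for k l u v c
    using indep_var_compose_real[OF indep_seqs_indep_var[of X Z k l u v],
                                 where f = "\<lambda>t. t" and g = "\<lambda>t. t powr c"] pmax that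
    by (simp add: pMAX_def)
  then show ?thesis
    using assms by unfold_locales auto
qed

lemma pmax_tail_ratio_tendsto:
  assumes pmax: "pMAX M X Z \<alpha>" and n: "n \<ge> 1" and m: "m \<ge> 1"
    and LX: "\<alpha> x \<ge> 1 \<Longrightarrow> (tail_ratio M (X m x') (X n x) \<longlongrightarrow> LX) at_top"
    and LZ: "\<alpha> x \<le> 1 \<Longrightarrow>
      (tail_ratio M (\<lambda>\<omega>. Z m x' \<omega> powr (1 / \<alpha> x')) (\<lambda>\<omega>. Z n x \<omega> powr (1 / \<alpha> x)) \<longlongrightarrow> LZ) at_top"
  shows "(tail_ratio M (pmax_Y X Z \<alpha> m x') (pmax_Y X Z \<alpha> n x) \<longlongrightarrow>
           (if \<alpha> x < 1 then LZ else if \<alpha> x = 1 then (LX + LZ) / 2 else LX)) at_top"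
proof -
  interpret indep_max_pair M "X n x" "\<lambda>\<omega>. Z n x \<omega> powr (1 / \<alpha> x)"
      "X m x'" "\<lambda>\<omega>. Z m x' \<omega> powr (1 / \<alpha> x')"
    using pMAX_indep_max_pair[OF pmax n m] .
  have fX: "std_frechet M (X n x)" and fZ: "std_frechet M (Z n x)" and \<alpha>: "\<alpha> x > 0"
    using pmax n by (auto simp: pMAX_def)
  have posX: "\<forall>\<^sub>F y in at_top. tail_prob M (X n x) y > 0"
    and posZ: "\<forall>\<^sub>F y in at_top. tail_prob M (\<lambda>\<omega>. Z n x \<omega> powr (1 / \<alpha> x)) y > 0"
    using std_frechet_tails_pos[OF fX fZ \<alpha>] by (simp_all add: eventually_conj_iff)
  have Y: "pmax_Y X Z \<alpha> k u = (\<lambda>\<omega>. max (X k u \<omega>) (Z k u \<omega> powr (1 / \<alpha> u)))" for k u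
    by (simp add: fun_eq_iff pmax_Y_def)
  consider "\<alpha> x < 1" | "\<alpha> x = 1" | "\<alpha> x > 1"
    by linarith
  then show ?thesis
  proof cases
    case 1
    with tail_ratio_max_tendsto_second[OF posZ std_frechet_tail_ratio_lt[OF fX fZ \<alpha>] LZ]
    show ?thesis unfolding Y by simp
  next
    case 2
    with tail_ratio_max_tendsto_balanced[OF posX std_frechet_tails_eq[OF fX fZ \<alpha>] LX LZ]
    show ?thesis unfolding Y by simp
  next
    case 3
    with tail_ratio_max_tendsto_first[OF posX std_frechet_tail_ratio_gt[OF fX fZ \<alpha>] LX]
    show ?thesis unfolding Y by simp
  qed
qed

lemma tail_dep_eqI:
  assumes "(tail_ratio M V U \<longlongrightarrow> L) at_top"
  shows "tail_dep M V U = L"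
  unfolding tail_dep_def using assms by (rule tendsto_Lim[rotated]) simp

lemma tail_dep_tendsto:
  assumes "tail_dep_exists M V U"
  shows "(tail_ratio M V U \<longlongrightarrow> tail_dep M V U) at_top"
proof -
  obtain L where "(tail_ratio M V U \<longlongrightarrow> L) at_top"
    using assms unfolding tail_dep_exists_def by blast
  with tail_dep_eqI[OF this] show ?thesis
    by simp
qed

theorem mainTheorem1:
  fixes M :: "'w measure"
    and X Z :: "nat \<Rightarrow> real^2 \<Rightarrow> 'w \<Rightarrow> real"
    and \<alpha> :: "real^2 \<Rightarrow> real"
    and n r :: nat and x x' :: "real^2"
  defines "Y \<equiv> pmax_Y X Z \<alpha>"
  assumes pmax: "pMAX M X Z \<alpha>"
    and n: "n \<ge> 1"
    and exY: "tail_dep_exists M (Y (n + r) x') (Y n x)"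
    and exX: "\<alpha> x \<ge> 1 \<Longrightarrow> tail_dep_exists M (X (n + r) x') (X n x)"
    and exZ: "r = 0 \<Longrightarrow> \<alpha> x \<le> 1 \<Longrightarrow>
      tail_dep_exists M (\<lambda>\<omega>. Z n x' \<omega> powr (1 / \<alpha> x')) (\<lambda>\<omega>. Z n x \<omega> powr (1 / \<alpha> x))"
  shows "(r > 0 \<longrightarrow>
            tail_dep M (Y (n + r) x') (Y n x) =
              (if \<alpha> x < 1 then 0
               else if \<alpha> x = 1 then tail_dep M (X (n + r) x') (X n x) / 2
               else tail_dep M (X (n + r) x') (X n x)))
       \<and> (r = 0 \<and> x \<noteq> x' \<longrightarrow>
            tail_dep M (Y n x') (Y n x) =
              (if \<alpha> x < 1 then
                 tail_dep M (\<lambda>\<omega>. Z n x' \<omega> powr (1 / \<alpha> x')) (\<lambda>\<omega>. Z n x \<omega> powr (1 / \<alpha> x))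
               else if \<alpha> x = 1 then
                 (tail_dep M (X n x') (X n x) +
                  tail_dep M (\<lambda>\<omega>. Z n x' \<omega> powr (1 / \<alpha> x')) (\<lambda>\<omega>. Z n x \<omega> powr (1 / \<alpha> x))) / 2
               else tail_dep M (X n x') (X n x)))"
proof -
  interpret prob_space M
    using pmax by (simp add: pMAX_def)
  have m: "n + r \<ge> 1"
    using n by simp
  define LZ where "LZ = (if r > 0 then 0
    else tail_dep M (\<lambda>\<omega>. Z n x' \<omega> powr (1 / \<alpha> x')) (\<lambda>\<omega>. Z n x \<omega> powr (1 / \<alpha> x)))"
  have "(tail_ratio M (\<lambda>\<omega>. Z (n + r) x' \<omega> powr (1 / \<alpha> x'))
                      (\<lambda>\<omega>. Z n x \<omega> powr (1 / \<alpha> x)) \<longlongrightarrow> LZ) at_top" if "\<alpha> x \<le> 1"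
  proof (cases "r > 0")
    case True
    then have "indep_var borel (Z n x) borel (Z (n + r) x')"
      using pmax n by (intro iid_seq_indep_var) (auto simp: pMAX_def)
    then have "(tail_ratio M (\<lambda>\<omega>. Z (n + r) x' \<omega> powr (1 / \<alpha> x'))
                             (\<lambda>\<omega>. Z n x \<omega> powr (1 / \<alpha> x)) \<longlongrightarrow> 0) at_top"
      by (rule tail_ratio_tendsto_0_if_indep[OF indep_var_compose_real]) auto
    with True show ?thesis
      unfolding LZ_def by simp
  next
    case False
    with tail_dep_tendsto[OF exZ] that show ?thesis
      unfolding LZ_def by simp
  qed
  note tail_dep_Y = tail_dep_eqI[OF pmax_tail_ratio_tendsto[OF pmax n m tail_dep_tendsto[OF exX] this]]
  show ?thesis
    by (cases "r = 0") (use tail_dep_Y in \<open>simp_all add: Y_def LZ_def\<close>)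
qed

end
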